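(* Let $h$ be a non-degenerate symmetric $(0,2)$-tensor field and $J_1,J_2$ $h$-symmetric $(1,1)$-tensor fields on a smooth manifold $M$ such that $J_i^2=-(\lambda_i+1)I$ for real numbers $\lambda_1,\lambda_2$, and $J_1J_2+J_2J_1=-(\lambda_1+\lambda_2)I$. Define $\hat J_i(X+\eta)=J_iX+\lambda_ih^{-1}(\eta)+h(X)-J_i^*\eta$, $i=1,2$, on $TM\oplus T^*M$. Then $(\hat J_1,\hat J_2,\hat J_1\hat J_2)$ is a generalized almost quaternionic structure on $M$, i.e. $\hat J_1^2=\hat J_2^2=-I$ and $\hat J_1\hat J_2=-\hat J_2\hat J_1$.
   Context: $h$ is viewed as the isomorphism $TM\to T^*M$, $X\mapsto h(X,\cdot)$, with inverse $h^{-1}$; $(J^*\eta)(X)=\eta(JX)$; $J$ is $h$-symmetric if $h(JX,Y)=h(X,JY)$. *)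

theory Defs
  imports "HOL-Analysis.Analysis"
begin

text \<open>Pointwise (fibrewise) model: 'v is a tangent space T_pM (finite-dimensional real
vector space), covectors are linear functionals 'v \<Rightarrow> real, and TM \<oplus> T*M is
modelled by pairs (X, eta).\<close>

definition flat :: "('v \<Rightarrow> 'v \<Rightarrow> real) \<Rightarrow> 'v \<Rightarrow> ('v \<Rightarrow> real)" where
  "flat h X = (\<lambda>Y. h X Y)"

definition sharp :: "('v \<Rightarrow> 'v \<Rightarrow> real) \<Rightarrow> ('v \<Rightarrow> real) \<Rightarrow> 'v" where
  "sharp h eta = (THE X. flat h X = eta)"

definition dual_map :: "('v \<Rightarrow> 'v) \<Rightarrow> ('v \<Rightarrow> real) \<Rightarrow> ('v \<Rightarrow> real)" where
  "dual_map J eta = (\<lambda>Y. eta (J Y))"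

definition nondegenerate :: "('v::real_vector \<Rightarrow> 'v \<Rightarrow> real) \<Rightarrow> bool" where
  "nondegenerate h \<longleftrightarrow> (\<forall>X. (\<forall>Y. h X Y = 0) \<longrightarrow> X = 0)"

definition h_symmetric :: "('v \<Rightarrow> 'v \<Rightarrow> real) \<Rightarrow> ('v \<Rightarrow> 'v) \<Rightarrow> bool" where
  "h_symmetric h J \<longleftrightarrow> (\<forall>X Y. h (J X) Y = h X (J Y))"

definition gen_J :: "('v::real_vector \<Rightarrow> 'v \<Rightarrow> real) \<Rightarrow> ('v \<Rightarrow> 'v) \<Rightarrow> real
    \<Rightarrow> 'v \<times> ('v \<Rightarrow> real) \<Rightarrow> 'v \<times> ('v \<Rightarrow> real)" where
  "gen_J h J lam p = (J (fst p) + lam *\<^sub>R sharp h (snd p),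
                      (\<lambda>Y. flat h (fst p) Y - dual_map J (snd p) Y))"

end

theory Submission
  imports Defs
begin

text \<open>A non-degenerate bilinear form on a finite-dimensional space identifies
vectors with covectors, so \<open>sharp h\<close> inverts \<open>flat h\<close> on linear functionals.
For \<open>h\<close>-symmetric \<open>K\<close> one has
\<open>h\<^sup>-\<^sup>1(h X - K\<^sup>* \<eta>) = X - K h\<^sup>-\<^sup>1 \<eta>\<close>,
which gives a closed formula for any composite \<open>gen_J h J a \<circ> gen_J h K b\<close>.
With \<open>J = K\<close> the relation \<open>J\<^sup>2 = -(\<lambda> + 1) I\<close> collapses it to \<open>-I\<close>;
adding the two composites of \<open>J\<^sub>1\<close> and \<open>J\<^sub>2\<close>, the cross terms cancel
pairwise and the rest vanishes by \<open>J\<^sub>1 J\<^sub>2 + J\<^sub>2 J\<^sub>1 = -(\<lambda>\<^sub>1 + \<lambda>\<^sub>2) I\<close>.\<close>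

lemma linear_functional_eq_inner:
  fixes f :: "'v::euclidean_space \<Rightarrow> real"
  assumes "linear f"
  shows "f x = adjoint f 1 \<bullet> x"
  using adjoint_works[OF assms, of x 1] by (simp add: inner_commute)

lemma bilinear_form_eq_inner:
  fixes h :: "'v::euclidean_space \<Rightarrow> 'v \<Rightarrow> real"
  assumes "bilinear h"
  shows "h X Y = adjoint (h X) 1 \<bullet> Y"
  using assms by (intro linear_functional_eq_inner) (simp add: bilinear_def)

lemma linear_bilinear_form_representer:
  fixes h :: "'v::euclidean_space \<Rightarrow> 'v \<Rightarrow> real"
  assumes "bilinear h"
  shows "linear (\<lambda>X. adjoint (h X) 1)"
proof
  fix x y :: 'v and c :: real
  have "adjoint (h (x + y)) 1 \<bullet> Y = (adjoint (h x) 1 + adjoint (h y) 1) \<bullet> Y" for Y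
    by (simp add: inner_add_left bilinear_ladd[OF assms]
        flip: bilinear_form_eq_inner[OF assms])
  then show "adjoint (h (x + y)) 1 = adjoint (h x) 1 + adjoint (h y) 1"
    using vector_eq_rdot by blast
  have "adjoint (h (c *\<^sub>R x)) 1 \<bullet> Y = (c *\<^sub>R adjoint (h x) 1) \<bullet> Y" for Y
    by (simp add: bilinear_lmul[OF assms] flip: bilinear_form_eq_inner[OF assms])
  then show "adjoint (h (c *\<^sub>R x)) 1 = c *\<^sub>R adjoint (h x) 1"
    using vector_eq_rdot by blast
qed

lemma nondegenerate_flat_surj:
  fixes h :: "'v::euclidean_space \<Rightarrow> 'v \<Rightarrow> real"
  assumes "bilinear h" "nondegenerate h" "linear eta"
  shows "\<exists>X. \<forall>Y. h X Y = eta Y"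
proof -
  define F where "F X = adjoint (h X) 1" for X
  have lin: "linear F" unfolding F_def using assms(1) by (rule linear_bilinear_form_representer)
  have "inj F"
  proof (rule linear_injective_0[THEN iffD2, OF lin], intro allI impI)
    fix X assume "F X = 0"
    then have "h X Y = 0" for Y
      using bilinear_form_eq_inner[OF assms(1), of X Y] by (simp add: F_def)
    then show "X = 0" using assms(2) unfolding nondegenerate_def by blast
  qed
  then have "surj F" using lin linear_injective_imp_surjective by blast
  then obtain X where "F X = adjoint eta 1" by (metis surjD)
  then show ?thesis unfolding F_def
    by (metis bilinear_form_eq_inner[OF assms(1)] linear_functional_eq_inner[OF assms(3)])
qed

lemma sharp_eqI:
  fixes h :: "'v::euclidean_space \<Rightarrow> 'v \<Rightarrow> real"
  assumes "bilinear h" "nondegenerate h" "\<And>Y. h X Y = eta Y"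
  shows "sharp h eta = X"
  unfolding sharp_def
proof (rule the_equality)
  show "flat h X = eta" using assms(3) by (simp add: flat_def fun_eq_iff)
next
  fix Z assume "flat h Z = eta"
  then have "\<forall>Y. h (Z - X) Y = 0"
    using assms(3) by (simp add: bilinear_lsub[OF assms(1)] flat_def fun_eq_iff)
  then show "Z = X" using assms(2) unfolding nondegenerate_def by auto
qed

lemma flat_sharp:
  fixes h :: "'v::euclidean_space \<Rightarrow> 'v \<Rightarrow> real"
  assumes "bilinear h" "nondegenerate h" "linear eta"
  shows "h (sharp h eta) Y = eta Y"
proof -
  obtain X where X: "\<And>Y. h X Y = eta Y" using nondegenerate_flat_surj[OF assms] by blast
  then show ?thesis using sharp_eqI[OF assms(1,2) X] by simp
qed

lemma sharp_flat_diff_dual_map: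
  fixes h :: "'v::euclidean_space \<Rightarrow> 'v \<Rightarrow> real"
  assumes "bilinear h" "nondegenerate h" "h_symmetric h K" "linear eta"
  shows "sharp h (\<lambda>Y. flat h X Y - dual_map K eta Y) = X - K (sharp h eta)"
  using assms
  by (intro sharp_eqI)
     (simp_all add: bilinear_lsub flat_sharp flat_def dual_map_def h_symmetric_def)

lemma gen_J_gen_J:
  fixes h :: "'v::euclidean_space \<Rightarrow> 'v \<Rightarrow> real"
  assumes "bilinear h" "nondegenerate h" "linear J" "h_symmetric h J" "h_symmetric h K"
    and "linear eta"
  shows "gen_J h J a (gen_J h K b (X, eta)) =
           (J (K X) + a *\<^sub>R X + b *\<^sub>R J (sharp h eta) - a *\<^sub>R K (sharp h eta),
            \<lambda>Y. h (K X - J X) Y + b * eta Y + eta (K (J Y)))"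
proof -
  have sharp: "sharp h (\<lambda>Y. h X Y - eta (K Y)) = X - K (sharp h eta)"
    using sharp_flat_diff_dual_map[OF assms(1,2,5,6)] by (simp add: flat_def dual_map_def)
  have vector: "J (K X + b *\<^sub>R sharp h eta) = J (K X) + b *\<^sub>R J (sharp h eta)"
    using assms(3) by (simp add: linear_add linear_scale)
  have covector: "h (K X + b *\<^sub>R sharp h eta) Y - (h X (J Y) - eta (K (J Y)))
      = h (K X - J X) Y + b * eta Y + eta (K (J Y))" for Y
    using assms(1,4,6)
    by (simp add: bilinear_ladd bilinear_lmul bilinear_lsub flat_sharp[OF assms(1,2)]
        h_symmetric_def)
  show ?thesis
    unfolding gen_J_def flat_def dual_map_def fst_conv snd_conv
    by (simp only: sharp vector covector) (simp add: algebra_simps)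
qed

lemma gen_J_gen_J_self:
  fixes h :: "'v::euclidean_space \<Rightarrow> 'v \<Rightarrow> real"
  assumes "bilinear h" "nondegenerate h" "linear J" "h_symmetric h J"
    and "\<And>X. J (J X) = - (a + 1) *\<^sub>R X" and "linear eta"
  shows "gen_J h J a (gen_J h J a (X, eta)) = (- X, \<lambda>Y. - eta Y)"
proof -
  have "h 0 Y = 0" for Y using assms(1) by (rule bilinear_lzero)
  then show ?thesis
    using assms(3,6)
    by (simp add: gen_J_gen_J[OF assms(1-4,4,6)] assms(5) linear_diff linear_neg linear_scale
        algebra_simps)
qed

lemma gen_J_anticommute:
  fixes h :: "'v::euclidean_space \<Rightarrow> 'v \<Rightarrow> real"
  assumes "bilinear h" "nondegenerate h" "linear J" "linear K" "h_symmetric h J" "h_symmetric h K"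
    and "\<And>X. J (K X) + K (J X) = - (a + b) *\<^sub>R X" and "linear eta"
  shows "gen_J h J a (gen_J h K b (X, eta))
           = (- fst (gen_J h K b (gen_J h J a (X, eta))),
              \<lambda>Y. - snd (gen_J h K b (gen_J h J a (X, eta))) Y)"
proof -
  note compose = gen_J_gen_J[OF assms(1,2) _ _ _ assms(8)]
  have "eta (J (K Y) + K (J Y)) = - (a + b) * eta Y" for Y
    using assms(8) by (simp add: assms(7) linear_scale)
  moreover have "h (K X - J X) Y = - h (J X - K X) Y" for Y
    using assms(1) by (simp add: bilinear_lsub)
  ultimately have snd_sum: "snd (gen_J h J a (gen_J h K b (X, eta))) Y
      + snd (gen_J h K b (gen_J h J a (X, eta))) Y = 0" for Y
    using assms(8) by (simp add: compose assms(3-6) linear_add algebra_simps)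
  have "fst (gen_J h J a (gen_J h K b (X, eta))) + fst (gen_J h K b (gen_J h J a (X, eta)))
      = J (K X) + K (J X) + (a + b) *\<^sub>R X"
    by (simp add: compose assms(3-6) algebra_simps)
  also have "\<dots> = 0" by (simp add: assms(7) algebra_simps)
  finally show ?thesis
    using snd_sum by (auto simp: fun_eq_iff eq_neg_iff_add_eq_0 intro: prod_eqI)
qed

theorem proposition3p13:
  fixes h :: "'v::euclidean_space \<Rightarrow> 'v \<Rightarrow> real"
    and J1 J2 :: "'v \<Rightarrow> 'v"
    and lam1 lam2 :: real
  assumes "bilinear h"
    and "\<And>X Y. h X Y = h Y X"
    and "nondegenerate h"
    and "linear J1" and "linear J2"
    and "h_symmetric h J1" and "h_symmetric h J2"
    and "\<And>X. J1 (J1 X) = - (lam1 + 1) *\<^sub>R X"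
    and "\<And>X. J2 (J2 X) = - (lam2 + 1) *\<^sub>R X"
    and "\<And>X. J1 (J2 X) + J2 (J1 X) = - (lam1 + lam2) *\<^sub>R X"
  shows "\<forall>X eta. linear eta \<longrightarrow>
           gen_J h J1 lam1 (gen_J h J1 lam1 (X, eta)) = (- X, \<lambda>Y. - eta Y)
         \<and> gen_J h J2 lam2 (gen_J h J2 lam2 (X, eta)) = (- X, \<lambda>Y. - eta Y)
         \<and> gen_J h J1 lam1 (gen_J h J2 lam2 (X, eta))
             = (- fst (gen_J h J2 lam2 (gen_J h J1 lam1 (X, eta))),
                \<lambda>Y. - snd (gen_J h J2 lam2 (gen_J h J1 lam1 (X, eta))) Y)"
proof (intro allI impI conjI)
  fix X :: 'v and eta :: "'v \<Rightarrow> real"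
  assume "linear eta"
  then show "gen_J h J1 lam1 (gen_J h J1 lam1 (X, eta)) = (- X, \<lambda>Y. - eta Y)"
    and "gen_J h J2 lam2 (gen_J h J2 lam2 (X, eta)) = (- X, \<lambda>Y. - eta Y)"
    and "gen_J h J1 lam1 (gen_J h J2 lam2 (X, eta))
      = (- fst (gen_J h J2 lam2 (gen_J h J1 lam1 (X, eta))),
         \<lambda>Y. - snd (gen_J h J2 lam2 (gen_J h J1 lam1 (X, eta))) Y)"
    by (rule gen_J_gen_J_self[OF assms(1,3,4,6,8)], rule gen_J_gen_J_self[OF assms(1,3,5,7,9)],
        rule gen_J_anticommute[OF assms(1,3-7,10)])
qed

end
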